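(* Let $X$ be an antipodal distance-regular graph of diameter $3$ on $n$ vertices. If $X$ is not a cocktail-party graph, then $\mathrm{motion}(X)\geq\frac{1}{13}n$.
   Context: A distance-regular graph of diameter $d$ is a connected graph such that for vertices $v,w$ at distance $i$ the numbers of neighbours of $w$ at distance $i-1,i,i+1$ from $v$ are constants depending only on $i$. It is antipodal if being at distance $d$ or equal is an equivalence relation on vertices. A cocktail-party graph is a regular complete bipartite graph with one perfect matching removed. The motion of a graph is the minimum, over non-identity automorphisms, of the number of vertices not fixed. *)

theory Defs
  imports Main "HOL-Library.Extended_Nat"
begin

definition simple_graph :: "'a set \<Rightarrow> ('a \<Rightarrow> 'a \<Rightarrow> bool) \<Rightarrow> bool" where
  "simple_graph V E \<longleftrightarrow> finite V \<and> (\<forall>u v. E u v \<longrightarrow> u \<in> V \<and> v \<in> V)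
     \<and> (\<forall>u v. E u v \<longrightarrow> E v u) \<and> (\<forall>u. \<not> E u u)"

definition is_walk :: "'a set \<Rightarrow> ('a \<Rightarrow> 'a \<Rightarrow> bool) \<Rightarrow> 'a list \<Rightarrow> bool" where
  "is_walk V E p \<longleftrightarrow> p \<noteq> [] \<and> set p \<subseteq> V \<and> (\<forall>i. Suc i < length p \<longrightarrow> E (p ! i) (p ! Suc i))"

definition walk_between :: "'a set \<Rightarrow> ('a \<Rightarrow> 'a \<Rightarrow> bool) \<Rightarrow> 'a \<Rightarrow> 'a \<Rightarrow> nat \<Rightarrow> bool" where
  "walk_between V E u v k \<longleftrightarrow> (\<exists>p. is_walk V E p \<and> hd p = u \<and> last p = v \<and> length p = Suc k)"

definition connected_graph :: "'a set \<Rightarrow> ('a \<Rightarrow> 'a \<Rightarrow> bool) \<Rightarrow> bool" where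
  "connected_graph V E \<longleftrightarrow> V \<noteq> {} \<and> (\<forall>u\<in>V. \<forall>v\<in>V. \<exists>k. walk_between V E u v k)"

text \<open>Graph distance (meaningful for connected graphs).\<close>
definition gdist :: "'a set \<Rightarrow> ('a \<Rightarrow> 'a \<Rightarrow> bool) \<Rightarrow> 'a \<Rightarrow> 'a \<Rightarrow> nat" where
  "gdist V E u v = (LEAST k. walk_between V E u v k)"

definition diameter :: "'a set \<Rightarrow> ('a \<Rightarrow> 'a \<Rightarrow> bool) \<Rightarrow> nat" where
  "diameter V E = Max {gdist V E u v | u v. u \<in> V \<and> v \<in> V}"

definition distance_regular :: "'a set \<Rightarrow> ('a \<Rightarrow> 'a \<Rightarrow> bool) \<Rightarrow> bool" where
  "distance_regular V E \<longleftrightarrow> simple_graph V E \<and> connected_graph V E \<and>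
     (\<exists>c a b :: nat \<Rightarrow> nat. \<forall>v\<in>V. \<forall>w\<in>V.
        card {x \<in> V. E w x \<and> gdist V E v x + 1 = gdist V E v w} = c (gdist V E v w) \<and>
        card {x \<in> V. E w x \<and> gdist V E v x = gdist V E v w} = a (gdist V E v w) \<and>
        card {x \<in> V. E w x \<and> gdist V E v x = gdist V E v w + 1} = b (gdist V E v w))"

definition antipodal :: "'a set \<Rightarrow> ('a \<Rightarrow> 'a \<Rightarrow> bool) \<Rightarrow> bool" where
  "antipodal V E \<longleftrightarrow> equiv V {(u, v). u \<in> V \<and> v \<in> V \<and> (u = v \<or> gdist V E u v = diameter V E)}"

text \<open>Cocktail-party graph (as in the paper): isomorphic to K_{m,m} minus a perfect matching.\<close>
definition cocktail_party :: "'a set \<Rightarrow> ('a \<Rightarrow> 'a \<Rightarrow> bool) \<Rightarrow> bool" where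
  "cocktail_party V E \<longleftrightarrow> (\<exists>A B \<sigma>. A \<inter> B = {} \<and> A \<union> B = V \<and> bij_betw \<sigma> A B \<and>
     (\<forall>x y. E x y \<longleftrightarrow> (x \<in> A \<and> y \<in> B \<and> y \<noteq> \<sigma> x) \<or> (y \<in> A \<and> x \<in> B \<and> x \<noteq> \<sigma> y)))"

definition automorphism :: "'a set \<Rightarrow> ('a \<Rightarrow> 'a \<Rightarrow> bool) \<Rightarrow> ('a \<Rightarrow> 'a) \<Rightarrow> bool" where
  "automorphism V E f \<longleftrightarrow> bij_betw f V V \<and> (\<forall>u\<in>V. \<forall>v\<in>V. E u v \<longleftrightarrow> E (f u) (f v))"

text \<open>Motion: minimum number of moved vertices over non-identity automorphisms
  (infinity if there is no non-identity automorphism).\<close>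
definition motion :: "'a set \<Rightarrow> ('a \<Rightarrow> 'a \<Rightarrow> bool) \<Rightarrow> enat" where
  "motion V E = (INF f \<in> {f. automorphism V E f \<and> (\<exists>v\<in>V. f v \<noteq> v)}.
                    enat (card {v \<in> V. f v \<noteq> v}))"

end

theory Submission
  imports Defs
begin

text \<open>The antipodal classes (fibres) of X all have the same size r \<ge> 2; two vertices of a fibre
  are at distance 3, so a vertex outside a fibre has exactly one neighbour in it.
  Let s be a non-identity automorphism. If s maps every vertex into its own fibre, then the
  neighbours of a fixed vertex are fixed, so by connectivity s has no fixed point at all.
  Otherwise s moves some fibre F off itself. Every fixed vertex has exactly one neighbour in F,
  and the fixed neighbours of g \<in> F are common neighbours of g and s g, which are at distance
  1 or 2; hence at most r \<cdot> max a1 c2 vertices are fixed, while the fibres of a vertex and of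
  its k neighbours show n \<ge> r (k + 1). Counting arguments with the intersection numbers give
  13 max a1 c2 \<le> 12 (k + 1), except when r = 2 and a1 = 0, where X is a cocktail-party
  graph whose colour classes are the vertices at even and at odd distance from a fixed vertex.\<close>

locale sgraph =
  fixes V :: "'a set" and E :: "'a \<Rightarrow> 'a \<Rightarrow> bool"
  assumes simple: "simple_graph V E"
begin

abbreviation "walk \<equiv> walk_between V E"

definition nbrs :: "'a \<Rightarrow> 'a set" where
  "nbrs w = {x \<in> V. E w x}"

lemma finite_V: "finite V"
  using simple unfolding simple_graph_def by auto

lemma edge_in_V: "E u v \<Longrightarrow> u \<in> V" "E u v \<Longrightarrow> v \<in> V"
  using simple unfolding simple_graph_def by auto

lemma edge_sym: "E u v \<Longrightarrow> E v u"
  using simple unfolding simple_graph_def by auto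

lemma edge_irrefl: "\<not> E u u"
  using simple unfolding simple_graph_def by auto

lemma finite_nbrs: "finite (nbrs w)"
  unfolding nbrs_def using finite_V by auto

lemma in_nbrs_iff [simp]: "x \<in> nbrs w \<longleftrightarrow> E w x"
  unfolding nbrs_def using edge_in_V by auto

lemma automorphism_in_V: "automorphism V E s \<Longrightarrow> v \<in> V \<Longrightarrow> s v \<in> V"
  unfolding automorphism_def by (meson bij_betw_apply)

lemma automorphism_edge: "automorphism V E s \<Longrightarrow> E u v \<Longrightarrow> E (s u) (s v)"
  unfolding automorphism_def using edge_in_V by blast

lemma walk_0: "walk u v 0 \<longleftrightarrow> u = v \<and> u \<in> V"
proof
  assume "walk u v 0"
  then obtain p where p: "is_walk V E p" "hd p = u" "last p = v" "length p = 1"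
    unfolding walk_between_def by auto
  then obtain x where "p = [x]" by (cases p) auto
  thus "u = v \<and> u \<in> V" using p unfolding is_walk_def by auto
next
  assume "u = v \<and> u \<in> V"
  thus "walk u v 0" unfolding walk_between_def is_walk_def
    by (rule_tac x="[u]" in exI) auto
qed

lemma walk_Suc: "walk u v (Suc n) \<longleftrightarrow> (\<exists>w. walk u w n \<and> E w v)"
proof
  assume "walk u v (Suc n)"
  then obtain p where p: "is_walk V E p" "hd p = u" "last p = v" "length p = Suc (Suc n)"
    unfolding walk_between_def by auto
  define q where "q = butlast p"
  have q: "length q = Suc n" "q \<noteq> []" using p(4) unfolding q_def by (auto simp: length_0_conv[symmetric])
  have pq: "p = q @ [v]" using p(3,4) unfolding q_def
    by (metis append_butlast_last_id list.size(3) nat.distinct(1))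
  have "is_walk V E q" using p(1) q(2) unfolding is_walk_def pq
    by (auto simp: nth_append dest: Suc_lessD)
  moreover have "hd q = u" using p(2) q pq by simp
  moreover have "E (last q) v"
    using p(1) q pq unfolding is_walk_def by (force simp: nth_append last_conv_nth)
  ultimately show "\<exists>w. walk u w n \<and> E w v" unfolding walk_between_def using q(1) by blast
next
  assume "\<exists>w. walk u w n \<and> E w v"
  then obtain w p where p: "is_walk V E p" "hd p = u" "last p = w" "length p = Suc n"
    and e: "E w v"
    unfolding walk_between_def by auto
  have "is_walk V E (p @ [v])"
    using p e edge_in_V(2)[OF e] unfolding is_walk_def
    by (auto simp: nth_append last_conv_nth less_Suc_eq)
  thus "walk u v (Suc n)" unfolding walk_between_def using p
    by (rule_tac x="p @ [v]" in exI) (auto simp: hd_append)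
qed

lemma walk_append: "walk u v m \<Longrightarrow> walk v w n \<Longrightarrow> walk u w (m + n)"
  by (induction n arbitrary: w) (auto simp: walk_0 walk_Suc)

lemma walk_edge: "E u v \<Longrightarrow> walk u v 1"
  using walk_Suc[of u v 0] walk_0 edge_in_V by auto

lemma walk_rev: "walk u v n \<Longrightarrow> walk v u n"
proof (induction n arbitrary: v)
  case (Suc n)
  then obtain x where "walk u x n" "E x v" by (auto simp: walk_Suc)
  with Suc.IH show ?case
    using walk_append[OF walk_edge[OF edge_sym]] by fastforce
qed (auto simp: walk_0)

lemma walk_homomorphism:
  assumes "\<And>v. v \<in> V \<Longrightarrow> f v \<in> V" and "\<And>u v. E u v \<Longrightarrow> E (f u) (f v)"
  shows "walk u v n \<Longrightarrow> walk (f u) (f v) n"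
proof (induction n arbitrary: v)
  case (Suc n)
  then obtain w where "walk u w n" "E w v" by (auto simp: walk_Suc)
  with Suc.IH show ?case using assms(2) walk_Suc by blast
qed (simp add: walk_0 assms(1))

end

locale connected_sgraph = sgraph +
  assumes connected: "connected_graph V E"
begin

abbreviation "d \<equiv> gdist V E"

lemma walk_gdist: "u \<in> V \<Longrightarrow> v \<in> V \<Longrightarrow> walk u v (d u v)"
  using connected unfolding connected_graph_def gdist_def by (metis LeastI_ex)

lemma gdist_le_walk: "walk u v n \<Longrightarrow> d u v \<le> n"
  unfolding gdist_def by (rule Least_le)

lemma gdist_self: "u \<in> V \<Longrightarrow> d u u = 0"
  using gdist_le_walk[of u u 0] walk_0 by auto

lemma gdist_eq_0_iff: "u \<in> V \<Longrightarrow> v \<in> V \<Longrightarrow> d u v = 0 \<longleftrightarrow> u = v"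
  using walk_gdist[of u v] gdist_self walk_0 by auto

lemma gdist_sym: "u \<in> V \<Longrightarrow> v \<in> V \<Longrightarrow> d u v = d v u"
  using walk_gdist gdist_le_walk walk_rev by (metis le_antisym)

lemma gdist_triangle: "u \<in> V \<Longrightarrow> v \<in> V \<Longrightarrow> w \<in> V \<Longrightarrow> d u w \<le> d u v + d v w"
  using walk_gdist gdist_le_walk walk_append by metis

lemma gdist_eq_1_iff: "u \<in> V \<Longrightarrow> v \<in> V \<Longrightarrow> d u v = 1 \<longleftrightarrow> E u v"
proof
  assume "u \<in> V" "v \<in> V" "d u v = 1"
  thus "E u v" using walk_gdist[of u v] by (auto simp: walk_Suc walk_0)
next
  assume "E u v"
  then have "d u v \<le> 1" "u \<noteq> v" using gdist_le_walk walk_edge edge_irrefl by auto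
  thus "d u v = 1" using gdist_eq_0_iff edge_in_V \<open>E u v\<close> by fastforce
qed

lemma gdist_edge: "E u v \<Longrightarrow> d u v = 1"
  using gdist_eq_1_iff edge_in_V by blast

lemma gdist_edge_le: "E v w \<Longrightarrow> u \<in> V \<Longrightarrow> d u w \<le> d u v + 1"
  using gdist_triangle gdist_edge edge_in_V by metis

lemma gdist_Suc_pred:
  assumes "u \<in> V" "w \<in> V" "d u w = Suc n"
  obtains x where "E x w" "d u x = n"
proof -
  obtain x where x: "walk u x n" "E x w"
    using walk_gdist[OF assms(1,2)] assms(3) by (auto simp: walk_Suc)
  have "d u x \<le> n" using gdist_le_walk[OF x(1)] .
  moreover have "d u w \<le> d u x + 1" using gdist_edge_le[OF x(2) assms(1)] .
  ultimately show ?thesis using that x(2) assms(3) by simp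
qed

lemma finite_gdist_values: "finite {d u v | u v. u \<in> V \<and> v \<in> V}"
proof -
  have "{d u v | u v. u \<in> V \<and> v \<in> V} = (\<lambda>(u, v). d u v) ` (V \<times> V)" by auto
  thus ?thesis using finite_V by simp
qed

lemma gdist_le_diameter: "u \<in> V \<Longrightarrow> v \<in> V \<Longrightarrow> d u v \<le> diameter V E"
  unfolding diameter_def by (rule Max_ge[OF finite_gdist_values]) auto

lemma diameter_attained: obtains u v where "u \<in> V" "v \<in> V" "d u v = diameter V E"
proof -
  obtain w where "w \<in> V" using connected unfolding connected_graph_def by blast
  hence "{d u v | u v. u \<in> V \<and> v \<in> V} \<noteq> {}" by blast
  from Max_in[OF finite_gdist_values this] have "diameter V E \<in> {d u v | u v. u \<in> V \<and> v \<in> V}"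
    unfolding diameter_def .
  with that show ?thesis by auto
qed

lemma adjacency_closed_subset_eq:
  assumes "P \<subseteq> V" "P \<noteq> {}" and closed: "\<And>u x. u \<in> P \<Longrightarrow> E u x \<Longrightarrow> x \<in> P"
  shows "P = V"
proof -
  obtain u where u: "u \<in> P" using assms(2) by blast
  have "v \<in> P" if "walk u v n" for v n
    using that
  proof (induction n arbitrary: v)
    case (Suc n)
    then obtain w where "walk u w n" "E w v" by (auto simp: walk_Suc)
    with Suc.IH closed show ?case by blast
  qed (simp add: walk_0 u)
  with walk_gdist[of u] assms(1) u show ?thesis by blast
qed

lemma automorphism_gdist:
  assumes s: "automorphism V E s" and "u \<in> V" "v \<in> V"
  shows "d (s u) (s v) = d u v"
proof -
  have bij: "bij_betw s V V" and adj: "\<And>u v. u \<in> V \<Longrightarrow> v \<in> V \<Longrightarrow> E u v \<longleftrightarrow> E (s u) (s v)"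
    using s unfolding automorphism_def by auto
  define t where "t = inv_into V s"
  have tV: "t v \<in> V" if "v \<in> V" for v
    using that bij unfolding t_def bij_betw_def by (simp add: inv_into_into)
  have st: "s (t v) = v" if "v \<in> V" for v
    using bij_betw_inv_into_right[OF bij that] unfolding t_def .
  have ts: "t (s v) = v" if "v \<in> V" for v
    using bij_betw_inv_into_left[OF bij that] unfolding t_def .
  have tE: "E (t x) (t y)" if "E x y" for x y
    using that adj[of "t x" "t y"] edge_in_V[OF that] tV st by simp
  have "walk (s u) (s v) (d u v)"
    using walk_homomorphism[of s, OF automorphism_in_V[OF s] automorphism_edge[OF s]] walk_gdist assms(2,3)
    by blast
  moreover have "walk (t (s u)) (t (s v)) (d (s u) (s v))"
    using walk_homomorphism[of t, OF tV tE] walk_gdist assms(2,3) automorphism_in_V[OF s] by blast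
  ultimately have "d (s u) (s v) \<le> d u v" "d u v \<le> d (s u) (s v)"
    using gdist_le_walk ts[OF assms(2)] ts[OF assms(3)] by simp_all
  thus ?thesis by simp
qed

end

locale antipodal_drg3 = connected_sgraph +
  fixes c a b :: "nat \<Rightarrow> nat"
  assumes intersection_numbers: "\<forall>v\<in>V. \<forall>w\<in>V.
        card {x \<in> V. E w x \<and> d v x + 1 = d v w} = c (d v w) \<and>
        card {x \<in> V. E w x \<and> d v x = d v w} = a (d v w) \<and>
        card {x \<in> V. E w x \<and> d v x = d v w + 1} = b (d v w)"
    and diameter_3: "diameter V E = 3"
    and antipodal: "antipodal V E"
begin

abbreviation "k \<equiv> b 0"

definition fibre :: "'a \<Rightarrow> 'a set" where
  "fibre u = {v \<in> V. v = u \<or> d u v = 3}"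

lemma gdist_le_3: "u \<in> V \<Longrightarrow> v \<in> V \<Longrightarrow> d u v \<le> 3"
  using gdist_le_diameter diameter_3 by metis

lemma card_nbrs: "w \<in> V \<Longrightarrow> card (nbrs w) = k"
proof -
  assume w: "w \<in> V"
  have "{x \<in> V. E w x \<and> d w x = d w w + 1} = nbrs w"
    unfolding nbrs_def using gdist_self[OF w] gdist_edge by auto
  thus ?thesis using intersection_numbers w gdist_self[OF w] by force
qed

lemma card_common_nbrs_edge: "E u x \<Longrightarrow> card (nbrs x \<inter> nbrs u) = a 1"
proof -
  assume e: "E u x"
  have "{y \<in> V. E x y \<and> d u y = d u x} = nbrs x \<inter> nbrs u"
    unfolding nbrs_def using gdist_edge[OF e] gdist_eq_1_iff edge_in_V(1)[OF e] by auto
  thus ?thesis using intersection_numbers edge_in_V[OF e] gdist_edge[OF e] by force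
qed

lemma card_common_nbrs_gdist_2:
  assumes "u \<in> V" "w \<in> V" "d u w = 2"
  shows "card (nbrs w \<inter> nbrs u) = c 2"
proof -
  have "{y \<in> V. E w y \<and> d u y + 1 = d u w} = nbrs w \<inter> nbrs u"
    unfolding nbrs_def using assms gdist_eq_1_iff by auto
  thus ?thesis using intersection_numbers assms by force
qed

lemma card_nbrs_gdist_2_of_edge: "E u x \<Longrightarrow> card {y \<in> V. E x y \<and> d u y = 2} = b 1"
proof -
  assume e: "E u x"
  have "card {y \<in> V. E x y \<and> d u y = d u x + 1} = b (d u x)"
    using intersection_numbers edge_in_V[OF e] by blast
  thus ?thesis using gdist_edge[OF e] by (simp add: numeral_2_eq_2)
qed

lemma gdist_2_has_nbr_gdist_3:
  assumes "u \<in> V" "w \<in> V" "d u w = 2"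
  obtains y where "E w y" "d u y = 3"
proof -
  obtain p q where pq: "p \<in> V" "q \<in> V" "d p q = 3"
    by (rule diameter_attained[unfolded diameter_3])
  obtain x where x: "E x q" "d p x = 2" using gdist_Suc_pred[OF pq(1,2)] pq(3) by auto
  have "q \<in> {y \<in> V. E x y \<and> d p y = d p x + 1}" using x pq by auto
  hence "0 < card {y \<in> V. E x y \<and> d p y = d p x + 1}"
    using finite_V by (auto simp: card_gt_0_iff)
  moreover have "card {y \<in> V. E x y \<and> d p y = d p x + 1} = b (d p x)"
    using intersection_numbers pq(1) edge_in_V(1)[OF x(1)] by blast
  ultimately have "0 < b 2" using x(2) by simp
  moreover have "card {y \<in> V. E w y \<and> d u y = d u w + 1} = b (d u w)"
    using intersection_numbers assms(1,2) by blast
  ultimately have "card {y \<in> V. E w y \<and> d u y = 3} \<noteq> 0" using assms(3) by simp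
  hence "{y \<in> V. E w y \<and> d u y = 3} \<noteq> {}" by (metis card.empty)
  thus ?thesis using that by blast
qed

lemma antipodal_relation_equiv: "equiv V {(u, v). u \<in> V \<and> v \<in> V \<and> (u = v \<or> d u v = 3)}"
  using antipodal diameter_3 unfolding antipodal_def by simp

lemma fibre_subset: "fibre u \<subseteq> V"
  unfolding fibre_def by auto

lemma finite_fibre: "finite (fibre u)"
  using finite_subset[OF fibre_subset finite_V] .

lemma self_in_fibre: "u \<in> V \<Longrightarrow> u \<in> fibre u"
  unfolding fibre_def by auto

lemma fibre_sym: "u \<in> V \<Longrightarrow> v \<in> fibre u \<Longrightarrow> u \<in> fibre v"
  using antipodal_relation_equiv unfolding equiv_def sym_def fibre_def by auto

lemma fibre_trans: "u \<in> V \<Longrightarrow> v \<in> fibre u \<Longrightarrow> w \<in> fibre v \<Longrightarrow> w \<in> fibre u"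
  using antipodal_relation_equiv unfolding equiv_def trans_def fibre_def by blast

lemma fibre_eq: "u \<in> V \<Longrightarrow> v \<in> fibre u \<Longrightarrow> fibre v = fibre u"
  using fibre_sym fibre_trans fibre_subset by blast

lemma gdist_fibre:
  assumes "u \<in> V" "v \<in> fibre u" "w \<in> fibre u" "v \<noteq> w"
  shows "d v w = 3"
proof -
  have "w \<in> fibre v" using fibre_eq[OF assms(1,2)] assms(3) by simp
  thus ?thesis using assms(4) unfolding fibre_def by simp
qed

lemma fibre_no_edge: "u \<in> V \<Longrightarrow> v \<in> fibre u \<Longrightarrow> w \<in> fibre u \<Longrightarrow> \<not> E v w"
  using gdist_fibre gdist_edge edge_irrefl by fastforce

lemma unique_nbr_in_fibre:
  assumes "u \<in> V" "x \<in> fibre u" "y \<in> fibre u" "E w x" "E w y"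
  shows "x = y"
proof (rule ccontr)
  assume "x \<noteq> y"
  hence "d x y = 3" using gdist_fibre assms(1-3) by blast
  moreover have "d x y \<le> d x w + d w y"
    using gdist_triangle edge_in_V assms(4,5) by blast
  ultimately show False using gdist_edge assms(4,5) edge_sym by fastforce
qed

lemma gdist_not_in_fibre:
  assumes "u \<in> V" "w \<in> V" "w \<notin> fibre u"
  shows "d u w = 1 \<or> d u w = 2"
  using assms gdist_le_3[OF assms(1,2)] gdist_eq_0_iff[OF assms(1,2)] self_in_fibre
  unfolding fibre_def by auto

lemma exists_nbr_in_fibre:
  assumes "u \<in> V" "w \<in> V" "w \<notin> fibre u"
  obtains x where "x \<in> fibre u" "E w x"
proof (cases "d u w = 1")
  case True
  thus ?thesis using that gdist_eq_1_iff assms(1,2) self_in_fibre edge_sym by blast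
next
  case False
  hence "d u w = 2" using gdist_not_in_fibre assms by blast
  then obtain y where "E w y" "d u y = 3" using gdist_2_has_nbr_gdist_3 assms by blast
  thus ?thesis using that edge_in_V unfolding fibre_def by blast
qed

definition fibre_nbr :: "'a \<Rightarrow> 'a \<Rightarrow> 'a" where
  "fibre_nbr w u = (THE x. x \<in> fibre u \<and> E w x)"

lemma fibre_nbr:
  assumes "u \<in> V" "w \<in> V" "w \<notin> fibre u"
  shows "fibre_nbr w u \<in> fibre u" "E w (fibre_nbr w u)"
proof -
  have "\<exists>!x. x \<in> fibre u \<and> E w x"
    using exists_nbr_in_fibre[OF assms] unique_nbr_in_fibre[OF assms(1)] by metis
  from theI'[OF this] show "fibre_nbr w u \<in> fibre u" "E w (fibre_nbr w u)"
    unfolding fibre_nbr_def by auto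
qed

lemma fibre_nbr_eqI:
  "u \<in> V \<Longrightarrow> w \<in> V \<Longrightarrow> w \<notin> fibre u \<Longrightarrow> x \<in> fibre u \<Longrightarrow> E w x \<Longrightarrow> fibre_nbr w u = x"
  using fibre_nbr unique_nbr_in_fibre by metis

text \<open>Matching each vertex of a fibre with its unique neighbour in another fibre is injective.\<close>
lemma card_fibre_le:
  assumes u: "u \<in> V" and z: "z \<in> V" "z \<notin> fibre u"
  shows "card (fibre z) \<le> card (fibre u)"
proof -
  have out: "f \<in> V" "f \<notin> fibre u" if "f \<in> fibre z" for f
    using that fibre_subset fibre_eq[OF z(1) that] fibre_eq[OF u] self_in_fibre[OF z(1)] z(2)
    by blast+
  have "inj_on (\<lambda>f. fibre_nbr f u) (fibre z)"
  proof (rule inj_onI)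
    fix f g assume fg: "f \<in> fibre z" "g \<in> fibre z" "fibre_nbr f u = fibre_nbr g u"
    have "E (fibre_nbr f u) f" "E (fibre_nbr f u) g"
      using fibre_nbr(2)[OF u out[OF fg(1)]] fibre_nbr(2)[OF u out[OF fg(2)]] fg(3) edge_sym
      by auto
    thus "f = g" using unique_nbr_in_fibre[OF z(1) fg(1,2)] by blast
  qed
  moreover have "(\<lambda>f. fibre_nbr f u) ` fibre z \<subseteq> fibre u"
    using fibre_nbr(1)[OF u out] by blast
  ultimately show ?thesis using card_inj_on_le finite_fibre by blast
qed

lemma card_fibre_eq:
  assumes "u \<in> V" "z \<in> V"
  shows "card (fibre z) = card (fibre u)"
proof (cases "z \<in> fibre u")
  case True
  thus ?thesis using fibre_eq[OF assms(1)] by simp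
next
  case False
  hence "u \<notin> fibre z" using fibre_sym[OF assms(2)] by blast
  thus ?thesis using card_fibre_le[OF assms(1,2) False] card_fibre_le[OF assms(2,1)] by simp
qed

lemma two_le_card_fibre:
  assumes u: "u \<in> V"
  shows "2 \<le> card (fibre u)"
proof -
  obtain p q where pq: "p \<in> V" "q \<in> V" "d p q = 3"
    by (rule diameter_attained[unfolded diameter_3])
  hence pq_fibre: "{p, q} \<subseteq> fibre p" and "p \<noteq> q" using gdist_self unfolding fibre_def by auto
  have "card {p, q} \<le> card (fibre p)" using pq_fibre by (rule card_mono[OF finite_fibre])
  hence "2 \<le> card (fibre p)" using \<open>p \<noteq> q\<close> by simp
  thus ?thesis using card_fibre_eq[OF u pq(1)] by simp
qed

lemma exists_antipode:
  assumes "u \<in> V"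
  obtains u' where "u' \<in> fibre u" "u' \<noteq> u"
proof -
  have "\<not> fibre u \<subseteq> {u}"
    using two_le_card_fibre[OF assms] card_mono[of "{u}" "fibre u"] by auto
  thus ?thesis using that by blast
qed

lemma nbr_of_antipode_gdist_2:
  assumes u: "u \<in> V" and u': "u' \<in> fibre u" "u' \<noteq> u" and w: "E u' w"
  shows "d u w = 2"
proof -
  have V: "w \<in> V" "u' \<in> V" using edge_in_V w by auto
  have "d u w = 1 \<or> d u w = 2"
    using gdist_not_in_fibre[OF u V(1)] fibre_no_edge[OF u u'(1)] w by blast
  moreover have "d u u' \<le> d u w + 1"
    using gdist_edge_le[OF edge_sym[OF w] u] .
  ultimately show ?thesis using u' unfolding fibre_def by auto
qed

lemma exists_nbr:
  assumes u: "u \<in> V"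
  obtains x where "E u x"
proof -
  obtain u' where u': "u' \<in> fibre u" "u' \<noteq> u" using exists_antipode[OF u] .
  hence "u' \<in> V" "d u' u = Suc 2"
    using fibre_subset gdist_sym[OF u] unfolding fibre_def by auto
  then obtain x where "E x u" using gdist_Suc_pred[OF _ u] by blast
  thus ?thesis using that edge_sym by blast
qed

lemma valency_pos:
  assumes u: "u \<in> V"
  shows "0 < k"
proof -
  obtain x where "E u x" using exists_nbr[OF u] .
  hence "0 < card (nbrs u)" using finite_nbrs by (auto simp: card_gt_0_iff)
  thus ?thesis using card_nbrs[OF u] by simp
qed

lemma a1_b1_bound: assumes e: "E u x" shows "1 + a 1 + b 1 \<le> k"
proof -
  have V: "u \<in> V" "x \<in> V" using edge_in_V e by auto
  define B where "B = {y \<in> V. E x y \<and> d u y = 2}"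
  have "insert u ((nbrs x \<inter> nbrs u) \<union> B) \<subseteq> nbrs x"
    unfolding B_def using edge_sym[OF e] by auto
  hence "card (insert u ((nbrs x \<inter> nbrs u) \<union> B)) \<le> k"
    using card_mono finite_nbrs card_nbrs[OF V(2)] by metis
  moreover have "u \<notin> (nbrs x \<inter> nbrs u) \<union> B"
    unfolding B_def using gdist_self[OF V(1)] edge_irrefl by auto
  moreover have "(nbrs x \<inter> nbrs u) \<inter> B = {}"
    unfolding B_def using gdist_edge by fastforce
  moreover have "finite B" unfolding B_def using finite_V by auto
  ultimately have "1 + (card (nbrs x \<inter> nbrs u) + card B) \<le> k"
    using finite_nbrs by (simp add: card_Un_disjoint)
  thus ?thesis using card_common_nbrs_edge[OF e] card_nbrs_gdist_2_of_edge[OF e]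
    unfolding B_def by simp
qed

lemma valency_mult_b1:
  assumes u: "u \<in> V"
  shows "k * b 1 = c 2 * card {w \<in> V. d u w = 2}"
proof -
  have "(\<Sum>x\<in>nbrs u. card {w \<in> {w \<in> V. d u w = 2}. E x w}) = c 2 * card {w \<in> V. d u w = 2}"
  proof (rule sum_multicount)
    have "{x \<in> nbrs u. E x w} = nbrs w \<inter> nbrs u" for w
      using edge_sym by auto
    thus "\<forall>w\<in>{w \<in> V. d u w = 2}. card {x \<in> nbrs u. E x w} = c 2"
      using card_common_nbrs_gdist_2[OF u] by simp
  qed (use finite_nbrs finite_V in auto)
  moreover have "card {w \<in> {w \<in> V. d u w = 2}. E x w} = b 1" if "x \<in> nbrs u" for x
  proof -
    have "{w \<in> {w \<in> V. d u w = 2}. E x w} = {y \<in> V. E x y \<and> d u y = 2}" by auto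
    thus ?thesis using card_nbrs_gdist_2_of_edge[of u x] that by simp
  qed
  ultimately show ?thesis using card_nbrs[OF u] by simp
qed

text \<open>The neighbourhoods of the antipodes of u are disjoint and lie in the second layer of u.\<close>
lemma card_gdist_2_ge:
  assumes u: "u \<in> V"
  shows "(card (fibre u) - 1) * k \<le> card {w \<in> V. d u w = 2}"
proof -
  define A where "A = fibre u - {u}"
  have disjoint: "nbrs i \<inter> nbrs j = {}" if "i \<in> A" "j \<in> A" "i \<noteq> j" for i j
  proof -
    have "\<not> (E i x \<and> E j x)" for x
      using unique_nbr_in_fibre[OF u, of i j x] that edge_sym unfolding A_def by blast
    thus ?thesis by auto
  qed
  have "card (\<Union>u'\<in>A. nbrs u') = (\<Sum>u'\<in>A. card (nbrs u'))"
    by (rule card_UN_disjoint) (use finite_fibre finite_nbrs disjoint A_def in auto)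
  also have "\<dots> = (\<Sum>u'\<in>A. k)"
    by (rule sum.cong) (use card_nbrs fibre_subset A_def in auto)
  also have "\<dots> = (card (fibre u) - 1) * k"
    unfolding A_def using self_in_fibre[OF u] finite_fibre by simp
  finally have "card (\<Union>u'\<in>A. nbrs u') = (card (fibre u) - 1) * k" .
  moreover have "(\<Union>u'\<in>A. nbrs u') \<subseteq> {w \<in> V. d u w = 2}"
    using nbr_of_antipode_gdist_2[OF u] edge_in_V unfolding A_def by auto
  hence "card (\<Union>u'\<in>A. nbrs u') \<le> card {w \<in> V. d u w = 2}"
    by (rule card_mono[rotated]) (simp add: finite_V)
  ultimately show ?thesis by simp
qed

lemma c2_mult_le_b1: assumes u: "u \<in> V" shows "(card (fibre u) - 1) * c 2 \<le> b 1"
proof -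
  have "k * ((card (fibre u) - 1) * c 2) = ((card (fibre u) - 1) * k) * c 2" by simp
  also have "\<dots> \<le> card {w \<in> V. d u w = 2} * c 2"
    using card_gdist_2_ge[OF u] by (rule mult_le_mono1)
  also have "\<dots> = k * b 1" using valency_mult_b1[OF u] by simp
  finally show ?thesis using valency_pos[OF u] by simp
qed

lemma c2_le_b1:
  assumes u: "u \<in> V"
  shows "c 2 \<le> b 1"
proof -
  have "1 * c 2 \<le> (card (fibre u) - 1) * c 2"
    using two_le_card_fibre[OF u] by (intro mult_le_mono1) simp
  also have "\<dots> \<le> b 1" using c2_mult_le_b1[OF u] .
  finally show ?thesis by simp
qed

text \<open>Inclusion-exclusion inside the neighbourhood of a common neighbour of u and w.\<close>
lemma a1_c2_bound:
  assumes u: "u \<in> V" and w: "w \<in> V" "d u w = 2"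
  shows "2 * a 1 + 3 \<le> c 2 + k"
proof -
  obtain y where y: "E y w" "d u y = 1" using gdist_Suc_pred[OF u w(1)] w(2) by auto
  have yV: "y \<in> V" using edge_in_V(1)[OF y(1)] .
  have uy: "E u y" and wy: "E w y" using y gdist_eq_1_iff[OF u yV] edge_sym by auto
  define Au where "Au = nbrs y \<inter> nbrs u"
  define Aw where "Aw = nbrs y \<inter> nbrs w"
  have fin: "finite Au" "finite Aw" unfolding Au_def Aw_def using finite_nbrs by auto
  have uw: "u \<noteq> w" "\<not> E u w" using w(2) gdist_self[OF u] gdist_edge by force+
  have "{u, w} \<subseteq> nbrs y" using uy wy edge_sym by auto
  hence "card (nbrs y - {u, w}) = k - 2" and "2 \<le> k"
    using card_nbrs[OF yV] finite_nbrs uw(1) card_mono[OF finite_nbrs, of "{u, w}" y]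
    by (simp_all add: card_Diff_subset)
  moreover have "Au \<union> Aw \<subseteq> nbrs y - {u, w}"
    unfolding Au_def Aw_def using uw(2) edge_irrefl edge_sym by auto
  ultimately have "card (Au \<union> Aw) \<le> k - 2"
    using card_mono[of "nbrs y - {u, w}"] finite_nbrs by (metis finite_Diff)
  moreover have "card (Au \<union> Aw) + card (Au \<inter> Aw) = 2 * a 1"
    using card_Un_Int[OF fin] card_common_nbrs_edge uy wy edge_sym
    unfolding Au_def Aw_def by (simp add: Int_commute)
  moreover have "insert y (Au \<inter> Aw) \<subseteq> nbrs w \<inter> nbrs u" "y \<notin> Au \<inter> Aw"
    unfolding Au_def Aw_def using uy wy edge_irrefl by auto
  hence "1 + card (Au \<inter> Aw) \<le> c 2"
    using card_common_nbrs_gdist_2[OF u w] card_mono[of "nbrs w \<inter> nbrs u"] finite_nbrs fin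
    by (metis card_insert_disjoint finite_Int plus_1_eq_Suc)
  ultimately show ?thesis using \<open>2 \<le> k\<close> by linarith
qed

lemma exists_gdist_2:
  assumes "u \<in> V"
  obtains w where "w \<in> V" "d u w = 2"
proof -
  obtain u' where u': "u' \<in> fibre u" "u' \<noteq> u" using exists_antipode[OF assms] .
  then obtain w where "E u' w" using exists_nbr fibre_subset by blast
  thus ?thesis using that nbr_of_antipode_gdist_2[OF assms u'] edge_in_V by blast
qed

lemma a1_bound: assumes u: "u \<in> V" shows "13 * a 1 \<le> 12 * (k + 1)"
proof -
  obtain x where "E u x" using exists_nbr[OF u] .
  hence "1 + a 1 + b 1 \<le> k" by (rule a1_b1_bound)
  moreover have "c 2 \<le> b 1" using c2_le_b1[OF u] .
  moreover have "2 * a 1 + 3 \<le> c 2 + k"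
    using exists_gdist_2[OF u] a1_c2_bound[OF u] by metis
  ultimately have "13 * a 1 \<le> 12 * k + 12" by linarith
  thus ?thesis by simp
qed

lemma triangle_free_if_a1_eq_0: "a 1 = 0 \<Longrightarrow> E u x \<Longrightarrow> E u y \<Longrightarrow> \<not> E x y"
proof
  assume "a 1 = 0" "E u x" "E u y" "E x y"
  hence "y \<in> nbrs x \<inter> nbrs u" by simp
  thus False using card_common_nbrs_edge[OF \<open>E u x\<close>] \<open>a 1 = 0\<close> finite_nbrs
    by (metis card_0_eq empty_iff finite_Int)
qed

lemma nbr_not_in_fibre_of_nbr:
  assumes "E u x" "E u z" "x \<noteq> z"
  shows "x \<notin> fibre z"
proof
  assume "x \<in> fibre z"
  moreover have "z \<in> V" using edge_in_V assms(2) by blast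
  ultimately show False using unique_nbr_in_fibre self_in_fibre assms by blast
qed

lemma independent_insert_nbrs_antipode:
  assumes "a 1 = 0" "u \<in> V" "u' \<in> fibre u" "u' \<noteq> u"
    and "x \<in> insert u (nbrs u')" "y \<in> insert u (nbrs u')"
  shows "\<not> E x y"
proof -
  have no_edge: "\<not> E u v" if "E u' v" for v
    using that unique_nbr_in_fibre[OF assms(2,3) self_in_fibre[OF assms(2)]] assms(4) edge_sym
    by blast
  show ?thesis
    using assms(5,6) no_edge triangle_free_if_a1_eq_0[OF assms(1)] edge_irrefl edge_sym
    by (metis in_nbrs_iff insert_iff)
qed

end

locale antipodal_drg3_double = antipodal_drg3 +
  assumes card_fibre_2: "\<And>u. u \<in> V \<Longrightarrow> card (fibre u) = 2"
begin

definition antipode :: "'a \<Rightarrow> 'a" where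
  "antipode u = (THE v. v \<in> fibre u \<and> v \<noteq> u)"

lemma fibre_eq_antipode:
  assumes u: "u \<in> V"
  shows "fibre u = {u, antipode u}" "antipode u \<noteq> u"
proof -
  obtain u' where u': "u' \<in> fibre u" "u' \<noteq> u" using exists_antipode[OF u] .
  have "{u, u'} \<subseteq> fibre u" using u' self_in_fibre[OF u] by auto
  hence fib: "fibre u = {u, u'}"
    using card_fibre_2[OF u] u'(2) by (metis card_2_iff card_subset_eq finite_fibre)
  hence "antipode u = u'" unfolding antipode_def using u'(2) by auto
  thus "fibre u = {u, antipode u}" "antipode u \<noteq> u" using fib u'(2) by auto
qed

lemma antipode_in_V: "u \<in> V \<Longrightarrow> antipode u \<in> V"
  using fibre_eq_antipode(1) fibre_subset by (metis insert_subset)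

lemma antipode_antipode:
  assumes u: "u \<in> V"
  shows "antipode (antipode u) = u"
proof -
  have "fibre (antipode u) = fibre u"
    using fibre_eq[OF u] fibre_eq_antipode(1)[OF u] by blast
  thus ?thesis using fibre_eq_antipode[OF u] fibre_eq_antipode[OF antipode_in_V[OF u]]
    by (metis insert_iff singletonD)
qed

lemma nbr_or_nbr_antipode:
  assumes "u \<in> V" "w \<in> V" "w \<notin> fibre u"
  shows "E w u \<or> E w (antipode u)"
proof -
  obtain x where "x \<in> fibre u" "E w x" using exists_nbr_in_fibre[OF assms] .
  thus ?thesis using fibre_eq_antipode(1)[OF assms(1)] by auto
qed

lemma antipode_edge:
  assumes e: "E x y"
  shows "E (antipode x) (antipode y)"
proof -
  have V: "x \<in> V" "y \<in> V" using edge_in_V e by auto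
  have y': "antipode y \<in> fibre y" "antipode y \<noteq> y"
    using fibre_eq_antipode[OF V(2)] by auto
  have "antipode y \<notin> fibre x"
    using fibre_eq[OF V(1)] fibre_eq[OF V(2) y'(1)] self_in_fibre[OF V(2)] fibre_no_edge[OF V(1)]
      self_in_fibre[OF V(1)] e by metis
  hence "E (antipode y) x \<or> E (antipode y) (antipode x)"
    using nbr_or_nbr_antipode[OF V(1)] antipode_in_V[OF V(2)] by blast
  moreover have "\<not> E (antipode y) x"
    using unique_nbr_in_fibre[OF V(2) self_in_fibre[OF V(2)] y'(1)] e edge_sym y'(2) by metis
  ultimately show ?thesis using edge_sym by blast
qed

text \<open>side u consists of the vertices at distance 0 or 2 from u; when a1 = 0, side u and
  side (antipode u) are the colour classes of a cocktail-party graph.\<close>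
definition side :: "'a \<Rightarrow> 'a set" where
  "side u = insert u (nbrs (antipode u))"

lemma side_antipode: "u \<in> V \<Longrightarrow> side (antipode u) = insert (antipode u) (nbrs u)"
  unfolding side_def by (simp add: antipode_antipode)

lemma antipode_image_side:
  assumes u: "u \<in> V"
  shows "antipode ` side u \<subseteq> side (antipode u)"
proof
  fix y assume "y \<in> antipode ` side u"
  then obtain x where x: "x \<in> side u" "y = antipode x" by blast
  show "y \<in> side (antipode u)"
  proof (cases "x = u")
    case False
    hence "E (antipode u) x" using x(1) unfolding side_def by simp
    hence "E u y" using antipode_edge antipode_antipode[OF u] x(2) by metis
    thus ?thesis unfolding side_antipode[OF u] by simp
  qed (use x in \<open>simp add: side_def\<close>)
qed

lemma bij_betw_antipode_sides: "u \<in> V \<Longrightarrow> bij_betw antipode (side u) (side (antipode u))"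
  using antipode_image_side[of u] antipode_image_side[of "antipode u"] antipode_antipode
    antipode_in_V edge_in_V(2)
  by (intro bij_betw_byWitness[where f'=antipode]) (auto simp: side_def)

lemma sides_disjoint:
  assumes u: "u \<in> V"
  shows "side u \<inter> side (antipode u) = {}"
proof -
  have fib: "antipode u \<in> fibre u" "antipode u \<noteq> u" using fibre_eq_antipode[OF u] by auto
  have "\<not> E u (antipode u)" "\<not> E (antipode u) u"
    using fibre_no_edge[OF u] fib self_in_fibre[OF u] by auto
  moreover have "nbrs u \<inter> nbrs (antipode u) = {}"
    using unique_nbr_in_fibre[OF u self_in_fibre[OF u] fib(1)] fib(2)
    by (auto dest!: edge_sym[of u] edge_sym[of "antipode u"])
  ultimately show ?thesis
    using fib(2) edge_irrefl unfolding side_def by (auto simp: antipode_antipode[OF u])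
qed

lemma sides_cover:
  assumes u: "u \<in> V"
  shows "side u \<union> side (antipode u) = V"
proof
  show "side u \<union> side (antipode u) \<subseteq> V"
    using u antipode_in_V[OF u] edge_in_V(2) by (auto simp: side_def antipode_antipode[OF u])
  show "V \<subseteq> side u \<union> side (antipode u)"
  proof
    fix w assume w: "w \<in> V"
    show "w \<in> side u \<union> side (antipode u)"
    proof (cases "w \<in> fibre u")
      case False
      hence "E u w \<or> E (antipode u) w" using nbr_or_nbr_antipode[OF u w] edge_sym by blast
      thus ?thesis by (auto simp: side_def antipode_antipode[OF u])
    qed (use fibre_eq_antipode(1)[OF u] in \<open>auto simp: side_def antipode_antipode[OF u]\<close>)
  qed
qed

lemma side_independent:
  assumes "a 1 = 0" "u \<in> V" "x \<in> side u" "y \<in> side u"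
  shows "\<not> E x y"
  using independent_insert_nbrs_antipode[OF assms(1,2) _ _ assms(3,4)[unfolded side_def]]
    fibre_eq_antipode[OF assms(2)] by auto

lemma edge_across_sides_iff:
  assumes a1: "a 1 = 0" and u: "u \<in> V" and x: "x \<in> side u" and y: "y \<in> side (antipode u)"
  shows "E x y \<longleftrightarrow> y \<noteq> antipode x"
proof
  have V: "x \<in> V" "y \<in> V" using x y sides_cover[OF u] by auto
  show "E x y \<Longrightarrow> y \<noteq> antipode x"
    using fibre_no_edge[OF V(1) self_in_fibre[OF V(1)]] fibre_eq_antipode(1)[OF V(1)] by auto
  assume "y \<noteq> antipode x"
  moreover have "y \<noteq> x" using x y sides_disjoint[OF u] by auto
  ultimately have "y \<notin> fibre x" using fibre_eq_antipode(1)[OF V(1)] by auto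
  hence "E y x \<or> E y (antipode x)" using nbr_or_nbr_antipode[OF V] by blast
  moreover have "antipode x \<in> side (antipode u)" using x antipode_image_side[OF u] by blast
  ultimately show "E x y"
    using side_independent[OF a1 antipode_in_V[OF u] y] edge_sym by blast
qed

lemma cocktail_party_if_a1_eq_0:
  assumes a1: "a 1 = 0"
  shows "cocktail_party V E"
proof -
  obtain u where u: "u \<in> V" using connected unfolding connected_graph_def by blast
  let ?A = "side u" and ?B = "side (antipode u)"
  have "E x y \<longleftrightarrow> x \<in> ?A \<and> y \<in> ?B \<and> y \<noteq> antipode x \<or> y \<in> ?A \<and> x \<in> ?B \<and> x \<noteq> antipode y"
    for x y
  proof
    assume e: "E x y"
    hence "x \<in> ?A \<and> y \<in> ?B \<or> y \<in> ?A \<and> x \<in> ?B"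
      using side_independent[OF a1 u] side_independent[OF a1 antipode_in_V[OF u]]
        sides_cover[OF u] edge_in_V by blast
    thus "x \<in> ?A \<and> y \<in> ?B \<and> y \<noteq> antipode x \<or> y \<in> ?A \<and> x \<in> ?B \<and> x \<noteq> antipode y"
      using edge_across_sides_iff[OF a1 u] e edge_sym by blast
  qed (use edge_across_sides_iff[OF a1 u] edge_sym in blast)
  thus ?thesis unfolding cocktail_party_def
    using sides_disjoint[OF u] sides_cover[OF u] bij_betw_antipode_sides[OF u] by blast
qed

lemma edge_antipode_of_nonadjacent_nbr:
  assumes "E u x" "E u z" "x \<noteq> z" "\<not> E x z"
  shows "E x (antipode z)"
  using nbr_or_nbr_antipode[OF edge_in_V(2)[OF assms(2)] edge_in_V(2)[OF assms(1)]]
    nbr_not_in_fibre_of_nbr[OF assms(1-3)] assms(4) by blast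

lemma antipode_ne_nbr: "E u z \<Longrightarrow> antipode z \<noteq> u"
  using fibre_no_edge[of z u z] fibre_eq_antipode(1) self_in_fibre edge_in_V(2) by fastforce

text \<open>For a triangle xyu, the antipode maps the neighbours of u adjacent to neither x nor y
  injectively to common neighbours of x and y other than u.\<close>
lemma valency_bound_if_a1_pos:
  assumes u: "u \<in> V" and a1: "1 \<le> a 1"
  shows "k + 1 \<le> 3 * a 1"
proof -
  obtain x where ux: "E u x" using exists_nbr[OF u] .
  have "nbrs x \<inter> nbrs u \<noteq> {}" using card_common_nbrs_edge[OF ux] a1 by auto
  then obtain y where xy: "E x y" and uy: "E u y" by auto
  define S where "S = (nbrs x \<inter> nbrs u) \<union> (nbrs y \<inter> nbrs u)"
  define Z where "Z = nbrs u - S"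
  have "card S \<le> card (nbrs x \<inter> nbrs u) + card (nbrs y \<inter> nbrs u)"
    unfolding S_def by (rule card_Un_le)
  hence card_S: "card S \<le> 2 * a 1" using card_common_nbrs_edge ux uy by simp
  have "S \<subseteq> nbrs u" unfolding S_def by blast
  hence "card Z = k - card S"
    unfolding Z_def using card_nbrs[OF u] finite_subset[OF _ finite_nbrs]
    by (simp add: card_Diff_subset)
  hence card_Z: "k \<le> card Z + 2 * a 1" using card_S by linarith
  have Z: "E u z" "\<not> E x z" "\<not> E y z" "z \<noteq> x" "z \<noteq> y" "z \<in> V" if "z \<in> Z" for z
    using that ux uy xy edge_sym[OF xy] edge_in_V(2) unfolding Z_def S_def by auto
  have "antipode z \<in> nbrs x \<inter> nbrs y - {u}" if z: "z \<in> Z" for z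
    using edge_antipode_of_nonadjacent_nbr[OF ux Z(1)[OF z] Z(4)[OF z, symmetric] Z(2)[OF z]]
      edge_antipode_of_nonadjacent_nbr[OF uy Z(1)[OF z] Z(5)[OF z, symmetric] Z(3)[OF z]]
      antipode_ne_nbr[OF Z(1)[OF z]] by simp
  hence "antipode ` Z \<subseteq> nbrs x \<inter> nbrs y - {u}" by blast
  moreover have "inj_on antipode Z"
    by (rule inj_on_inverseI[where g=antipode]) (simp add: antipode_antipode Z(6))
  ultimately have "card Z \<le> card (nbrs x \<inter> nbrs y - {u})"
    by (intro card_inj_on_le) (simp_all add: finite_nbrs)
  also have "\<dots> = a 1 - 1"
  proof -
    have "u \<in> nbrs x \<inter> nbrs y" using edge_sym[OF ux] edge_sym[OF uy] by simp
    moreover have "card (nbrs x \<inter> nbrs y) = a 1"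
      using card_common_nbrs_edge[OF xy] by (simp add: Int_commute)
    ultimately show ?thesis by (simp add: finite_nbrs)
  qed
  finally show ?thesis using card_Z a1 by linarith
qed

end

context antipodal_drg3
begin

lemma c2_bound:
  assumes u: "u \<in> V" and not_cp: "\<not> cocktail_party V E"
  shows "13 * c 2 \<le> 12 * (k + 1)"
proof -
  obtain x where "E u x" using exists_nbr[OF u] .
  hence ab: "1 + a 1 + b 1 \<le> k" by (rule a1_b1_bound)
  consider "3 \<le> card (fibre u)" | "card (fibre u) = 2" using two_le_card_fibre[OF u] by linarith
  then show ?thesis
  proof cases
    case 1
    hence "2 * c 2 \<le> b 1"
      using c2_mult_le_b1[OF u] mult_le_mono1[of 2 "card (fibre u) - 1" "c 2"] by linarith
    hence "13 * c 2 \<le> 12 * k + 12" using ab by linarith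
    thus ?thesis by simp
  next
    case 2
    interpret antipodal_drg3_double V E c a b
      by (intro antipodal_drg3_double.intro antipodal_drg3_axioms antipodal_drg3_double_axioms.intro)
        (simp add: 2 card_fibre_eq[OF u])
    have "a 1 \<noteq> 0" using cocktail_party_if_a1_eq_0 not_cp by blast
    hence "k + 1 \<le> 3 * a 1" using valency_bound_if_a1_pos[OF u] by simp
    moreover have "c 2 \<le> b 1" using c2_le_b1[OF u] .
    ultimately have "13 * c 2 \<le> 12 * k + 12" using ab by linarith
    thus ?thesis by simp
  qed
qed

lemma common_nbrs_bound:
  "u \<in> V \<Longrightarrow> \<not> cocktail_party V E \<Longrightarrow> 13 * max (a 1) (c 2) \<le> 12 * (k + 1)"
  using a1_bound c2_bound by (simp add: max_def)

lemma automorphism_fibre: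
  assumes s: "automorphism V E s" and u: "u \<in> V" and v: "v \<in> fibre u"
  shows "s v \<in> fibre (s u)"
proof -
  have "v \<in> V" using v fibre_subset by blast
  hence "s v \<in> V" "d (s u) (s v) = d u v"
    using automorphism_in_V[OF s] automorphism_gdist[OF s u] by auto
  thus ?thesis using v unfolding fibre_def by auto
qed

text \<open>A fixed neighbour of x is adjacent to both x and s x, which lie in one fibre.\<close>
lemma no_fixed_point_if_fibres_invariant:
  assumes s: "automorphism V E s" and invariant: "\<forall>u\<in>V. s u \<in> fibre u"
    and moves: "\<exists>v\<in>V. s v \<noteq> v"
  shows "{v \<in> V. s v = v} = {}"
proof (rule ccontr)
  have closed: "s x = x" if "u \<in> V" "s u = u" "E u x" for u x
  proof -
    have "x \<in> V" using edge_in_V that(3) by blast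
    moreover have "E u (s x)" using automorphism_edge[OF s that(3)] that(2) by simp
    ultimately show ?thesis
      using unique_nbr_in_fibre invariant self_in_fibre that(3) by blast
  qed
  assume "{v \<in> V. s v = v} \<noteq> {}"
  hence "{v \<in> V. s v = v} = V"
    by (rule adjacency_closed_subset_eq[rotated]) (use closed edge_in_V in auto)
  thus False using moves by auto
qed

lemma card_fixed_nbrs_le:
  assumes s: "automorphism V E s" and g: "g \<in> V" "s g \<notin> fibre g"
  shows "card {w \<in> V. s w = w \<and> E w g} \<le> max (a 1) (c 2)"
proof -
  have sg: "s g \<in> V" using automorphism_in_V[OF s g(1)] .
  have "{w \<in> V. s w = w \<and> E w g} \<subseteq> nbrs (s g) \<inter> nbrs g"
  proof
    fix w assume w: "w \<in> {w \<in> V. s w = w \<and> E w g}"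
    hence "E g w" using edge_sym by blast
    moreover have "E (s g) (s w)" using automorphism_edge[OF s \<open>E g w\<close>] .
    ultimately show "w \<in> nbrs (s g) \<inter> nbrs g" using w by simp
  qed
  hence "card {w \<in> V. s w = w \<and> E w g} \<le> card (nbrs (s g) \<inter> nbrs g)"
    by (rule card_mono[OF finite_Int[OF disjI1 [OF finite_nbrs]]])
  moreover have "card (nbrs (s g) \<inter> nbrs g) = a 1 \<or> card (nbrs (s g) \<inter> nbrs g) = c 2"
    using gdist_not_in_fibre[OF g(1) sg g(2)] gdist_eq_1_iff[OF g(1) sg]
      card_common_nbrs_edge card_common_nbrs_gdist_2[OF g(1) sg] by auto
  ultimately show ?thesis by linarith
qed

text \<open>Double counting of the edges between the fixed points and the fibre of u.\<close>
lemma card_fixed_points_le: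
  assumes s: "automorphism V E s" and u: "u \<in> V" "s u \<notin> fibre u"
  shows "card {v \<in> V. s v = v} \<le> card (fibre u) * max (a 1) (c 2)"
proof -
  define P where "P = {v \<in> V. s v = v}"
  have su: "s u \<in> V" using automorphism_in_V[OF s u(1)] .
  have moved_off: "s g \<notin> fibre g" if g: "g \<in> fibre u" for g
  proof
    assume "s g \<in> fibre g"
    hence "fibre (s g) = fibre u" using fibre_eq[OF u(1)] fibre_eq[OF u(1) g] by simp
    moreover have "fibre (s g) = fibre (s u)"
      using fibre_eq[OF su automorphism_fibre[OF s u(1) g]] .
    ultimately show False using u(2) self_in_fibre[OF su] by simp
  qed
  have one: "{g \<in> fibre u. E w g} = {fibre_nbr w u}" if "w \<in> P" for w
  proof -
    have "w \<in> V" "w \<notin> fibre u"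
      using that moved_off[of w] self_in_fibre[of w] unfolding P_def by auto
    thus ?thesis using fibre_nbr[OF u(1)] fibre_nbr_eqI[OF u(1)] by blast
  qed
  have "card P = (\<Sum>w\<in>P. card {g \<in> fibre u. E w g})"
    using one by simp
  also have "\<dots> = (\<Sum>g\<in>fibre u. card {w \<in> P. E w g})"
    by (rule sum_multicount_gen) (auto simp: P_def finite_V finite_fibre)
  also have "\<dots> \<le> (\<Sum>g\<in>fibre u. max (a 1) (c 2))"
  proof (rule sum_mono)
    fix g assume "g \<in> fibre u"
    thus "card {w \<in> P. E w g} \<le> max (a 1) (c 2)"
      using card_fixed_nbrs_le[OF s _ moved_off] fibre_subset unfolding P_def
      by (simp add: conj_assoc subset_iff)
  qed
  finally show ?thesis unfolding P_def by simp
qed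

lemma eq_if_in_fibre_closed_nbhd:
  assumes u: "u \<in> V" and yz: "y \<in> insert u (nbrs u)" "z \<in> insert u (nbrs u)" "y \<in> fibre z"
  shows "y = z"
proof (rule ccontr)
  assume "y \<noteq> z"
  have zV: "z \<in> V" using yz(2) u edge_in_V(2) by auto
  have "z \<in> fibre y" using fibre_sym[OF zV yz(3)] .
  consider "y = u" | "z = u" | "E u y" "E u z" using yz(1,2) \<open>y \<noteq> z\<close> by auto
  thus False
  proof cases
    case 1
    thus False using fibre_no_edge[OF zV yz(3) self_in_fibre[OF zV]] yz(2) \<open>y \<noteq> z\<close> by auto
  next
    case 2
    thus False using fibre_no_edge[OF u self_in_fibre[OF u]] yz(1,3) \<open>y \<noteq> z\<close> by auto
  next
    case 3
    thus False using nbr_not_in_fibre_of_nbr yz(3) \<open>y \<noteq> z\<close> by blast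
  qed
qed

lemma card_fibre_mult_le_card:
  assumes u: "u \<in> V"
  shows "card (fibre u) * (k + 1) \<le> card V"
proof -
  define Y where "Y = insert u (nbrs u)"
  have Y: "y \<in> V" if "y \<in> Y" for y using that u edge_in_V unfolding Y_def by auto
  have "card (\<Union>y\<in>Y. fibre y) = (\<Sum>y\<in>Y. card (fibre y))"
  proof (rule card_UN_disjoint)
    show "\<forall>y\<in>Y. \<forall>z\<in>Y. y \<noteq> z \<longrightarrow> fibre y \<inter> fibre z = {}"
      using eq_if_in_fibre_closed_nbhd[OF u] fibre_eq self_in_fibre Y unfolding Y_def
      by (metis disjoint_iff)
  qed (use finite_fibre finite_nbrs Y_def in auto)
  also have "\<dots> = card Y * card (fibre u)"
    using card_fibre_eq[OF u] Y by simp
  also have "card Y = k + 1"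
    unfolding Y_def using card_nbrs[OF u] finite_nbrs edge_irrefl by simp
  finally show ?thesis
    using card_mono[OF finite_V, of "\<Union>y\<in>Y. fibre y"] fibre_subset
    by (simp add: UN_subset_iff mult.commute)
qed

lemma card_le_13_card_moved:
  assumes s: "automorphism V E s" and moves: "\<exists>v\<in>V. s v \<noteq> v"
    and not_cp: "\<not> cocktail_party V E"
  shows "card V \<le> 13 * card {v \<in> V. s v \<noteq> v}"
proof -
  have "{v \<in> V. s v \<noteq> v} = V - {v \<in> V. s v = v}" by auto
  hence moved: "card {v \<in> V. s v \<noteq> v} = card V - card {v \<in> V. s v = v}"
    using finite_V by (simp add: card_Diff_subset)
  show ?thesis
  proof (cases "\<forall>u\<in>V. s u \<in> fibre u")
    case True
    hence no_fixed: "{v \<in> V. s v = v} = {}"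
      using no_fixed_point_if_fibres_invariant[OF s _ moves] by blast
    show ?thesis using moved unfolding no_fixed by simp
  next
    case False
    then obtain u where u: "u \<in> V" "s u \<notin> fibre u" by blast
    have "13 * card {v \<in> V. s v = v} \<le> card (fibre u) * (13 * max (a 1) (c 2))"
      using card_fixed_points_le[OF s u] by simp
    also have "\<dots> \<le> card (fibre u) * (12 * (k + 1))"
      using common_nbrs_bound[OF u(1) not_cp] by (rule mult_le_mono2)
    also have "\<dots> = 12 * (card (fibre u) * (k + 1))" by (simp add: algebra_simps)
    also have "\<dots> \<le> 12 * card V"
      using card_fibre_mult_le_card[OF u(1)] by simp
    finally show ?thesis using moved card_mono[OF finite_V, of "{v \<in> V. s v = v}"] by linarith
  qed
qed

end

lemma motion_attained:
  assumes "motion V E \<noteq> \<infinity>"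
  obtains f where "automorphism V E f" "\<exists>v\<in>V. f v \<noteq> v"
    "motion V E = enat (card {v \<in> V. f v \<noteq> v})"
proof -
  let ?M = "(\<lambda>f. enat (card {v \<in> V. f v \<noteq> v})) ` {f. automorphism V E f \<and> (\<exists>v\<in>V. f v \<noteq> v)}"
  have motion: "motion V E = Inf ?M" unfolding motion_def by (rule refl)
  have "?M \<noteq> {}"
  proof
    assume "?M = {}"
    hence "motion V E = Inf {}" using motion by (simp only:)
    thus False using assms by (simp add: top_enat_def)
  qed
  then obtain m where "m \<in> ?M" by blast
  hence "Inf ?M \<in> ?M" by (rule wellorder_InfI)
  then obtain f where f: "automorphism V E f" "\<exists>v\<in>V. f v \<noteq> v"
    and "Inf ?M = enat (card {v \<in> V. f v \<noteq> v})"
    by blast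
  thus ?thesis using that[OF f] motion by simp
qed

theorem proposition5p10:
  fixes V :: "'a set" and E :: "'a \<Rightarrow> 'a \<Rightarrow> bool"
  assumes "distance_regular V E"
    and "diameter V E = 3"
    and "antipodal V E"
    and "\<not> cocktail_party V E"
  shows "13 * motion V E \<ge> enat (card V)"
proof -
  have "\<exists>c a b. antipodal_drg3 V E c a b"
    using assms(1-3) unfolding distance_regular_def
    by (elim conjE exE) (intro exI antipodal_drg3.intro connected_sgraph.intro
        connected_sgraph_axioms.intro sgraph.intro antipodal_drg3_axioms.intro, assumption+)
  then obtain c a b where "antipodal_drg3 V E c a b" by blast
  then interpret antipodal_drg3 V E c a b .
  show ?thesis
  proof (cases "motion V E = \<infinity>")
    case False
    then obtain f where f: "automorphism V E f" "\<exists>v\<in>V. f v \<noteq> v"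
      and motion: "motion V E = enat (card {v \<in> V. f v \<noteq> v})"
      by (rule motion_attained)
    have "enat (card V) \<le> enat (13 * card {v \<in> V. f v \<noteq> v})"
      using card_le_13_card_moved[OF f assms(4)] by simp
    also have "\<dots> = 13 * motion V E" unfolding motion by (simp add: numeral_eq_enat)
    finally show ?thesis .
  next
    case True
    have "(13::enat) * \<infinity> = \<infinity>" by (rule imult_infinity_right) simp
    thus ?thesis using True by simp
  qed
qed

end
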